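(* Let $C>0$. For every integer $i\ge1$ there exists a constant $q_i'$ with $|q_i'|\ge\frac{(i-1)!!}{200i^2C^i}$ such that for every $x_1$ with $|x_1|\le C$, writing $x=(x_1,\sqrt{C^2-x_1^2})$: for even $i$, $$x_1^i=\frac1{q_i'}\mathbb{E}_{w_0\sim\mathcal N(0,I_2),\,b_0\sim\mathcal N(0,1)}\Big[h_i(\alpha_1)\mathbf 1\{0\le-b_0\le1/(2i)\}\mathbf 1\Big\{\tfrac{\langle w_0,x\rangle}{C}+b_0\ge0\Big\}\Big];$$ for odd $i$, $$x_1^i=\frac1{q_i'}\mathbb{E}_{w_0\sim\mathcal N(0,I_2),\,b_0\sim\mathcal N(0,1)}\Big[h_i(\alpha_1)\mathbf 1\{|b_0|\le1/(2i)\}\mathbf 1\Big\{\tfrac{\langle w_0,x\rangle}{C}+b_0\ge0\Big\}\Big].$$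
   Context: $w_0=(\alpha_1,\beta_1)\in\mathbb{R}^2$ with $\alpha_1,\beta_1$ independent standard normals, and $b_0\sim\mathcal N(0,1)$ independent of $w_0$. $h_i$ is the degree-$i$ probabilists' Hermite polynomial, $h_i(x)=i!\sum_{k=0}^{\lfloor i/2\rfloor}\frac{(-1)^k}{k!(i-2k)!}\frac{x^{i-2k}}{2^k}$; $0!!=1$. *)

theory Defs
  imports "HOL-Probability.Probability"
begin

definition hermite :: "nat \<Rightarrow> real \<Rightarrow> real" where
  "hermite i x = fact i * (\<Sum>k\<le>i div 2.
      (-1) ^ k / (fact k * fact (i - 2 * k)) * x ^ (i - 2 * k) / 2 ^ k)"

fun dfact :: "nat \<Rightarrow> nat" where
  "dfact 0 = 1"
| "dfact (Suc 0) = 1"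
| "dfact (Suc (Suc n)) = Suc (Suc n) * dfact n"

definition std_normal :: "real measure" where
  "std_normal = density lborel std_normal_density"

text \<open>Expectation over w0 = (alpha1, beta1) ~ N(0, I_2) and b0 ~ N(0,1), all independent.\<close>
definition gauss_exp3 :: "(real \<Rightarrow> real \<Rightarrow> real \<Rightarrow> real) \<Rightarrow> real" where
  "gauss_exp3 f = (\<integral>((a, b), c). f a b c \<partial>((std_normal \<Otimes>\<^sub>M std_normal) \<Otimes>\<^sub>M std_normal))"

end

(* Write x / C = (u1, u2), a unit vector with u2 >= 0, and s = u1 alpha_1 + u2 beta_1. The pair
   (alpha_1, s) is standard Gaussian with correlation u1, and the Hermite polynomials are
   eigenfunctions of the corresponding noise operator: E[h_i(alpha_1) | s] = u1^i h_i(s).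
   As (phi h_(i-1))' = - phi h_i, this gives E[h_i(alpha_1) 1{s + b_0 >= 0} | b_0]
   = u1^i phi(b_0) h_(i-1)(-b_0), so the expectation is (x_1 / C)^i K with K independent of x_1,
   and q'_i = K / C^i.
   For the lower bound on K: on the window of b_0, of width at most 1/i, h_(i-1) is dominated by
   its lowest-order term, +-(i-1)!! t for even i and +-(i-2)!! for odd i, so it keeps a constant
   sign there. *)

theory Submission
  imports Defs "HOL-Computational_Algebra.Polynomial"
begin

section \<open>Hermite polynomials\<close>

text \<open>\<open>matchings n k\<close> is the number of \<open>k\<close>-edge matchings of the complete graph on \<open>n\<close> vertices
  (split on whether the last vertex is matched); up to sign these are the coefficients of \<open>hermite n\<close>.\<close>

fun matchings :: "nat \<Rightarrow> nat \<Rightarrow> nat" where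
  "matchings n 0 = 1"
| "matchings 0 (Suc k) = 0"
| "matchings (Suc 0) (Suc k) = 0"
| "matchings (Suc (Suc n)) (Suc k) = matchings (Suc n) (Suc k) + Suc n * matchings n k"

lemma matchings_eq_0: "n < 2 * k \<Longrightarrow> matchings n k = 0"
  by (induction n k rule: matchings.induct) auto

lemma matchings_fact: "2 * k \<le> n \<Longrightarrow> matchings n k * (fact k * fact (n - 2 * k) * 2 ^ k) = fact n"
proof (induction n k rule: matchings.induct)
  case (4 n k)
  then have "2 * k \<le> n" by simp
  have unmatched: "matchings (Suc n) (Suc k) * (fact (Suc k) * fact (n - 2 * k) * 2 ^ Suc k)
      = (n - 2 * k) * fact (Suc n)"
  proof (cases "2 * k = n")
    case True
    then show ?thesis by (simp add: matchings_eq_0)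
  next
    case False
    define r where "r = n - Suc (2 * k)"
    have r: "Suc n - 2 * Suc k = r" "n - 2 * k = Suc r"
      using \<open>2 * k \<le> n\<close> False unfolding r_def by simp_all
    have "matchings (Suc n) (Suc k) * (fact (Suc k) * fact (n - 2 * k) * 2 ^ Suc k)
        = Suc r * (matchings (Suc n) (Suc k) * (fact (Suc k) * fact r * 2 ^ Suc k))"
      unfolding r(2) fact_Suc[of r] by (simp only: of_nat_id ac_simps)
    also have "\<dots> = (n - 2 * k) * fact (Suc n)"
      using "4.IH"(1) \<open>2 * k \<le> n\<close> False r by simp
    finally show ?thesis .
  qed
  have matched: "Suc n * matchings n k * (fact (Suc k) * fact (n - 2 * k) * 2 ^ Suc k)
      = 2 * Suc k * fact (Suc n)"
  proof -
    have "Suc n * matchings n k * (fact (Suc k) * fact (n - 2 * k) * 2 ^ Suc k)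
        = 2 * Suc k * Suc n * (matchings n k * (fact k * fact (n - 2 * k) * 2 ^ k))"
      by (simp only: fact_Suc of_nat_id power_Suc ac_simps)
    also have "\<dots> = 2 * Suc k * fact (Suc n)"
      using "4.IH"(2)[OF \<open>2 * k \<le> n\<close>] by (simp add: algebra_simps)
    finally show ?thesis .
  qed
  have "matchings (Suc (Suc n)) (Suc k) * (fact (Suc k) * fact (Suc (Suc n) - 2 * Suc k) * 2 ^ Suc k)
      = (n - 2 * k + 2 * Suc k) * fact (Suc n)"
    using unmatched matched by (simp add: add_mult_distrib)
  also have "\<dots> = fact (Suc (Suc n))"
    using \<open>2 * k \<le> n\<close> by simp
  finally show ?case .
qed auto

definition hermite_term :: "nat \<Rightarrow> nat \<Rightarrow> real \<Rightarrow> real" where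
  "hermite_term n k x = (-1) ^ k * real (matchings n k) * x ^ (n - 2 * k)"

lemma hermite_eq_sum_terms:
  assumes "n div 2 \<le> N"
  shows "hermite n x = (\<Sum>k\<le>N. hermite_term n k x)"
proof -
  have "hermite n x = (\<Sum>k\<le>n div 2. hermite_term n k x)"
    unfolding hermite_def sum_distrib_left
  proof (rule sum.cong[OF refl])
    fix k assume "k \<in> {..n div 2}"
    then have "real (matchings n k) * (fact k * fact (n - 2 * k) * 2 ^ k) = fact n"
      using arg_cong[where f=real, OF matchings_fact[of k n]] by simp
    moreover have "(fact k * fact (n - 2 * k) * 2 ^ k :: real) \<noteq> 0" by simp
    ultimately show "fact n * ((-1) ^ k / (fact k * fact (n - 2 * k)) * x ^ (n - 2 * k) / 2 ^ k)
        = hermite_term n k x"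
      unfolding hermite_term_def by (simp add: field_simps)
  qed
  also have "\<dots> = (\<Sum>k\<le>N. hermite_term n k x)"
    using assms by (intro sum.mono_neutral_left) (auto simp: hermite_term_def matchings_eq_0)
  finally show ?thesis .
qed

lemma hermite_term_Suc_Suc:
  "hermite_term (Suc (Suc n)) (Suc k) x
    = x * hermite_term (Suc n) (Suc k) x - real (Suc n) * hermite_term n k x"
proof -
  have shifted: "x * hermite_term (Suc n) (Suc k) x
      = (-1) ^ Suc k * real (matchings (Suc n) (Suc k)) * x ^ (n - 2 * k)"
  proof (cases "2 * Suc k \<le> Suc n")
    case True
    then have "Suc (Suc n - 2 * Suc k) = n - 2 * k" by simp
    then have pow: "x * x ^ (Suc n - 2 * Suc k) = x ^ (n - 2 * k)" by (metis power_Suc)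
    show ?thesis unfolding hermite_term_def pow[symmetric] by (simp only: ac_simps)
  qed (simp add: hermite_term_def matchings_eq_0)
  show ?thesis unfolding shifted by (simp add: hermite_term_def algebra_simps)
qed

lemma hermite_Suc_Suc: "hermite (Suc (Suc n)) x = x * hermite (Suc n) x - real (Suc n) * hermite n x"
proof -
  have term_0: "hermite_term (Suc (Suc n)) 0 x = x * hermite_term (Suc n) 0 x"
    by (simp add: hermite_term_def)
  have terms_Suc: "hermite (Suc n) x = hermite_term (Suc n) 0 x + (\<Sum>k\<le>n. hermite_term (Suc n) (Suc k) x)"
    using hermite_eq_sum_terms[of "Suc n" "Suc n"] sum.atMost_Suc_shift[of "\<lambda>k. hermite_term (Suc n) k x" n]
    by simp
  have terms: "hermite n x = (\<Sum>k\<le>Suc n. hermite_term n k x)"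
    by (rule hermite_eq_sum_terms) simp
  have "hermite (Suc (Suc n)) x = (\<Sum>k\<le>Suc (Suc n). hermite_term (Suc (Suc n)) k x)"
    by (rule hermite_eq_sum_terms) simp
  also have "\<dots> = hermite_term (Suc (Suc n)) 0 x + (\<Sum>k\<le>Suc n. hermite_term (Suc (Suc n)) (Suc k) x)"
    by (rule sum.atMost_Suc_shift)
  also have "\<dots> = x * (hermite_term (Suc n) 0 x + (\<Sum>k\<le>Suc n. hermite_term (Suc n) (Suc k) x))
      - real (Suc n) * (\<Sum>k\<le>Suc n. hermite_term n k x)"
    by (simp add: term_0 hermite_term_Suc_Suc sum_subtractf sum_distrib_left algebra_simps)
  also have "\<dots> = x * hermite (Suc n) x - real (Suc n) * hermite n x"
    unfolding terms_Suc terms by (simp add: hermite_term_def matchings_eq_0)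
  finally show ?thesis .
qed

lemma hermite_0 [simp]: "hermite 0 x = 1"
  by (simp add: hermite_def)

lemma hermite_1 [simp]: "hermite (Suc 0) x = x"
  by (simp add: hermite_def)

lemma hermite_Suc: "hermite (Suc n) x = x * hermite n x - real n * hermite (n - 1) x"
  by (cases n) (simp_all add: hermite_Suc_Suc)

lemma hermite_minus: "hermite n (- x) = (-1) ^ n * hermite n x"
  by (induction n rule: induct_nat_012) (simp_all add: hermite_Suc_Suc algebra_simps)

lemma hermite_has_real_derivative:
  "(hermite n has_real_derivative real n * hermite (n - 1) x) (at x)"
proof (induction n rule: induct_nat_012)
  case 0
  have "hermite 0 = (\<lambda>_. 1)" by (simp add: fun_eq_iff)
  then show ?case by simp
next
  case 1
  have "hermite 1 = (\<lambda>x. x)" by (simp add: fun_eq_iff)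
  then show ?case by simp
next
  case (ge2 n)
  have "((\<lambda>x. x * hermite (Suc n) x - real (Suc n) * hermite n x) has_real_derivative
      1 * hermite (Suc n) x + real (Suc n) * hermite n x * x - real (Suc n) * (real n * hermite (n - 1) x)) (at x)"
    using ge2 by (intro DERIV_diff DERIV_mult DERIV_cmult DERIV_ident) simp_all
  moreover have "1 * hermite (Suc n) x + real (Suc n) * hermite n x * x - real (Suc n) * (real n * hermite (n - 1) x)
      = real (Suc (Suc n)) * hermite (Suc n) x"
    by (simp add: hermite_Suc[of n] algebra_simps)
  ultimately show ?case
    by (simp add: hermite_Suc_Suc[abs_def] del: of_nat_Suc)
qed

definition hermite_poly :: "nat \<Rightarrow> real poly" where
  "hermite_poly n = (\<Sum>k\<le>n. monom ((-1) ^ k * real (matchings n k)) (n - 2 * k))"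

lemma poly_hermite_poly [simp]: "poly (hermite_poly n) x = hermite n x"
  by (simp add: hermite_poly_def poly_sum poly_monom hermite_eq_sum_terms[of n n] hermite_term_def)

lemma continuous_on_hermite [continuous_intros]: "continuous_on S (hermite n)"
proof -
  have "continuous_on S (\<lambda>x. poly (hermite_poly n) x)" by (intro continuous_intros)
  then show ?thesis by simp
qed

lemma borel_measurable_hermite [measurable]: "hermite n \<in> borel_measurable borel"
  by (intro borel_measurable_continuous_onI continuous_on_hermite)

section \<open>Gaussian integration by parts\<close>

abbreviation \<phi> :: "real \<Rightarrow> real" where
  "\<phi> \<equiv> std_normal_density"

lemma std_normal_density_minus [simp]: "\<phi> (- x) = \<phi> x"
  by (simp add: std_normal_density_def)

lemma std_normal_density_le_1: "\<phi> x \<le> 1"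
proof -
  have "1 \<le> sqrt (2 * pi)"
    using pi_gt3 by (simp add: real_le_rsqrt)
  then have "1 / sqrt (2 * pi) * exp (- x\<^sup>2 / 2) \<le> 1 * 1"
    by (intro mult_mono) (auto simp: field_simps)
  then show ?thesis
    by (simp add: std_normal_density_def)
qed

lemma std_normal_density_has_real_derivative: "(\<phi> has_real_derivative - x * \<phi> x) (at x)"
  unfolding std_normal_density_def
  by (auto intro!: derivative_eq_intros simp: power2_eq_square field_simps)

lemma isCont_std_normal_density: "isCont \<phi> x"
  using std_normal_density_has_real_derivative by (rule DERIV_isCont)

lemma integrable_std_normal_density_poly: "integrable lborel (\<lambda>z. \<phi> z * poly p z)"
proof -
  have "(\<lambda>z. \<phi> z * poly p z) = (\<lambda>z. \<Sum>k\<le>degree p. coeff p k * (\<phi> z * z ^ k))"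
    by (simp add: poly_altdef sum_distrib_left mult_ac)
  then show ?thesis
    by (simp add: integrable_std_normal_moment)
qed

lemma tendsto_std_normal_density_power_at_top: "((\<lambda>x. \<phi> x * x ^ k) \<longlongrightarrow> 0) at_top"
proof (rule tendsto_sandwich)
  show "\<forall>\<^sub>F x in at_top. 0 \<le> \<phi> x * x ^ k"
    using eventually_ge_at_top[of 0] by eventually_elim simp
  show "\<forall>\<^sub>F x in at_top. \<phi> x * x ^ k \<le> x ^ k / exp x / sqrt (2 * pi)"
    using eventually_ge_at_top[of 2]
  proof eventually_elim
    case (elim x)
    then have "exp (- x\<^sup>2 / 2) \<le> exp (- x)"
      by (simp add: power2_eq_square field_simps)
    then have "exp (- x\<^sup>2 / 2) * x ^ k \<le> exp (- x) * x ^ k"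
      using elim by (intro mult_right_mono) auto
    then show ?case
      by (simp add: std_normal_density_def exp_minus field_simps)
  qed
  show "((\<lambda>x. x ^ k / exp x / sqrt (2 * pi)) \<longlongrightarrow> 0) at_top"
    using tendsto_divide_zero[OF tendsto_power_div_exp_0] by simp
qed simp

lemma tendsto_std_normal_density_poly_at_top: "((\<lambda>x. \<phi> x * poly p x) \<longlongrightarrow> 0) at_top"
proof -
  have "((\<lambda>x. \<Sum>k\<le>degree p. coeff p k * (\<phi> x * x ^ k)) \<longlongrightarrow> 0) at_top"
    using tendsto_sum[of "{..degree p}", OF tendsto_mult_right_zero[OF tendsto_std_normal_density_power_at_top]]
    by simp
  then show ?thesis
    by (simp add: poly_altdef sum_distrib_left mult_ac)
qed

lemma tendsto_std_normal_density_poly_at_bot: "((\<lambda>x. \<phi> x * poly p x) \<longlongrightarrow> 0) at_bot"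
  using tendsto_std_normal_density_poly_at_top[of "pcompose p [:0, -1:]"]
  by (simp add: filterlim_at_bot_mirror poly_pcompose)

lemma std_normal_integration_by_parts:
  fixes a :: ereal
  assumes "a < \<infinity>" and lim: "(((\<lambda>x. \<phi> x * poly p x) \<circ> real_of_ereal) \<longlongrightarrow> A) (at_right a)"
  shows "(LBINT z=a..\<infinity>. \<phi> z * (z * poly p z - poly (pderiv p) z)) = A"
proof -
  let ?F = "\<lambda>x. - (\<phi> x * poly p x)"
  have "(LBINT z=a..\<infinity>. \<phi> z * (z * poly p z - poly (pderiv p) z)) = 0 - (- A)"
  proof (rule interval_integral_FTC_integrable)
    show "(?F has_vector_derivative \<phi> x * (x * poly p x - poly (pderiv p) x)) (at x)" for x
      unfolding has_real_derivative_iff_has_vector_derivative[symmetric]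
      by (auto intro!: derivative_eq_intros std_normal_density_has_real_derivative simp: algebra_simps)
    show "isCont (\<lambda>z. \<phi> z * (z * poly p z - poly (pderiv p) z)) x" for x
      by (intro continuous_intros isCont_std_normal_density)
    have "integrable lborel (\<lambda>z. \<phi> z * poly ([:0, 1:] * p - pderiv p) z)"
      by (rule integrable_std_normal_density_poly)
    then show "set_integrable lborel (einterval a \<infinity>) (\<lambda>z. \<phi> z * (z * poly p z - poly (pderiv p) z))"
      unfolding set_integrable_def by (intro integrable_mult_indicator) simp_all
    show "((?F \<circ> real_of_ereal) \<longlongrightarrow> - A) (at_right a)"
      using tendsto_minus[OF lim] by (simp add: comp_def)
    show "((?F \<circ> real_of_ereal) \<longlongrightarrow> 0) (at_left \<infinity>)"
      unfolding ereal_tendsto_simps using tendsto_minus[OF tendsto_std_normal_density_poly_at_top] by simp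
  qed fact
  then show ?thesis by simp
qed

lemma integral_std_normal_density_mult_poly:
  "(\<integral>z. \<phi> z * (z * poly p z) \<partial>lborel) = (\<integral>z. \<phi> z * poly (pderiv p) z \<partial>lborel)"
proof -
  have "(LBINT z=-\<infinity>..\<infinity>. \<phi> z * (z * poly p z - poly (pderiv p) z)) = 0"
    by (rule std_normal_integration_by_parts)
      (simp_all add: ereal_tendsto_simps tendsto_std_normal_density_poly_at_bot)
  then have "(\<integral>z. \<phi> z * (z * poly p z) - \<phi> z * poly (pderiv p) z \<partial>lborel) = 0"
    by (simp add: interval_lebesgue_integral_def set_lebesgue_integral_def right_diff_distrib)
  moreover have "integrable lborel (\<lambda>z. \<phi> z * (z * poly p z))"
    using integrable_std_normal_density_poly[of "[:0, 1:] * p"] by simp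
  ultimately show ?thesis
    by (simp add: integrable_std_normal_density_poly)
qed

lemma poly_pderiv_hermite_poly: "poly (pderiv (hermite_poly n)) x = real n * hermite (n - 1) x"
  using DERIV_unique[OF poly_DERIV[of "hermite_poly n" x]] hermite_has_real_derivative[of n x]
  by (simp add: fun_eq_iff[symmetric])

lemma integrable_std_normal_density_hermite_affine:
  "integrable lborel (\<lambda>z. \<phi> z * hermite n (a + b * z))"
  using integrable_std_normal_density_poly[of "pcompose (hermite_poly n) [:a, b:]"]
  by (simp add: poly_pcompose ac_simps)

lemma integral_std_normal_density_mult_hermite_affine:
  "(\<integral>z. \<phi> z * (z * hermite (Suc n) (a + b * z)) \<partial>lborel)
    = b * real (Suc n) * (\<integral>z. \<phi> z * hermite n (a + b * z) \<partial>lborel)"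
proof -
  let ?p = "pcompose (hermite_poly (Suc n)) [:a, b:]"
  have deriv: "poly (pderiv ?p) z = b * real (Suc n) * hermite n (a + b * z)" for z
    by (simp add: pderiv_pcompose poly_pcompose poly_pderiv_hermite_poly pderiv_pCons ac_simps)
  have "(\<integral>z. \<phi> z * (z * hermite (Suc n) (a + b * z)) \<partial>lborel) = (\<integral>z. \<phi> z * (z * poly ?p z) \<partial>lborel)"
    by (simp add: poly_pcompose ac_simps)
  also have "\<dots> = (\<integral>z. \<phi> z * poly (pderiv ?p) z \<partial>lborel)"
    by (rule integral_std_normal_density_mult_poly)
  also have "\<dots> = (\<integral>z. b * real (Suc n) * (\<phi> z * hermite n (a + b * z)) \<partial>lborel)"
    by (rule Bochner_Integration.integral_cong[OF refl]) (simp only: deriv ac_simps)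
  finally show ?thesis
    by simp
qed

lemma integral_std_normal_density_hermite_affine_Suc_Suc:
  "(\<integral>z. \<phi> z * hermite (Suc (Suc n)) (a + b * z) \<partial>lborel)
    = a * (\<integral>z. \<phi> z * hermite (Suc n) (a + b * z) \<partial>lborel)
      - (1 - b\<^sup>2) * real (Suc n) * (\<integral>z. \<phi> z * hermite n (a + b * z) \<partial>lborel)"
proof -
  have "integrable lborel (\<lambda>z. \<phi> z * (z * hermite (Suc n) (a + b * z)))"
    using integrable_std_normal_density_poly[of "[:0, 1:] * pcompose (hermite_poly (Suc n)) [:a, b:]"]
    by (simp add: poly_pcompose ac_simps)
  moreover have "(\<integral>z. \<phi> z * hermite (Suc (Suc n)) (a + b * z) \<partial>lborel)
      = (\<integral>z. a * (\<phi> z * hermite (Suc n) (a + b * z)) + b * (\<phi> z * (z * hermite (Suc n) (a + b * z)))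
          - real (Suc n) * (\<phi> z * hermite n (a + b * z)) \<partial>lborel)"
    by (rule Bochner_Integration.integral_cong[OF refl]) (simp add: hermite_Suc_Suc algebra_simps)
  ultimately have "(\<integral>z. \<phi> z * hermite (Suc (Suc n)) (a + b * z) \<partial>lborel)
      = a * (\<integral>z. \<phi> z * hermite (Suc n) (a + b * z) \<partial>lborel)
        + b * (\<integral>z. \<phi> z * (z * hermite (Suc n) (a + b * z)) \<partial>lborel)
        - real (Suc n) * (\<integral>z. \<phi> z * hermite n (a + b * z) \<partial>lborel)"
    using integrable_std_normal_density_hermite_affine
    by (simp add: Bochner_Integration.integral_diff Bochner_Integration.integral_add)
  then show ?thesis
    unfolding integral_std_normal_density_mult_hermite_affine by (simp add: power2_eq_square algebra_simps)
qed

lemma integral_hermite_gaussian_noise: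
  assumes "u1\<^sup>2 + u2\<^sup>2 = 1"
  shows "(\<integral>z. \<phi> z * hermite n (u1 * s + u2 * z) \<partial>lborel) = u1 ^ n * hermite n s"
proof (induction n rule: induct_nat_012)
  case 0
  show ?case using integral_normal_density[of 0 1] by simp
next
  case 1
  have "(\<integral>z. \<phi> z * hermite 1 (u1 * s + u2 * z) \<partial>lborel)
      = (\<integral>z. u1 * s * \<phi> z + u2 * (\<phi> z * z) \<partial>lborel)"
    by (simp add: algebra_simps)
  also have "\<dots> = u1 * s * (\<integral>z. \<phi> z \<partial>lborel) + u2 * (\<integral>z. \<phi> z * z \<partial>lborel)"
    using integrable_std_normal_moment[of 1] by (subst Bochner_Integration.integral_add) auto
  also have "(\<integral>z. \<phi> z * z \<partial>lborel) = 0"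
    using integral_std_normal_density_mult_poly[of 1] by simp
  finally show ?case
    by simp
next
  case (ge2 n)
  have u1: "u1\<^sup>2 = 1 - u2\<^sup>2"
    using assms by simp
  have "(\<integral>z. \<phi> z * hermite (Suc (Suc n)) (u1 * s + u2 * z) \<partial>lborel)
      = u1 * s * (u1 ^ Suc n * hermite (Suc n) s) - u1\<^sup>2 * real (Suc n) * (u1 ^ n * hermite n s)"
    unfolding integral_std_normal_density_hermite_affine_Suc_Suc ge2 u1 ..
  also have "\<dots> = u1 ^ Suc (Suc n) * hermite (Suc (Suc n)) s"
    unfolding hermite_Suc_Suc[of n s] by (simp add: power2_eq_square algebra_simps)
  finally show ?case .
qed

lemma integral_std_normal_density_hermite_Ici:
  "(\<integral>s. \<phi> s * hermite (Suc n) s * indicator {t..} s \<partial>lborel) = \<phi> t * hermite n t"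
proof -
  have "(LBINT s=ereal t..\<infinity>. \<phi> s * (s * poly (hermite_poly n) s - poly (pderiv (hermite_poly n)) s))
      = \<phi> t * poly (hermite_poly n) t"
  proof (rule std_normal_integration_by_parts)
    have "isCont (\<lambda>x. \<phi> x * poly (hermite_poly n) x) t"
      by (intro continuous_intros isCont_std_normal_density)
    then show "(((\<lambda>x. \<phi> x * poly (hermite_poly n) x) \<circ> real_of_ereal) \<longlongrightarrow> \<phi> t * poly (hermite_poly n) t)
        (at_right (ereal t))"
      unfolding ereal_tendsto_simps isCont_def by (rule filterlim_at_split[THEN iffD1, THEN conjunct2])
  qed simp
  then have "(\<integral>s. \<phi> s * hermite (Suc n) s * indicator {t<..} s \<partial>lborel) = \<phi> t * hermite n t"
    by (simp add: interval_integral_to_infinity_eq set_lebesgue_integral_def poly_pderiv_hermite_poly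
        hermite_Suc[of n] algebra_simps)
  moreover have "AE s in lborel. \<phi> s * hermite (Suc n) s * indicator {t<..} s
      = \<phi> s * hermite (Suc n) s * indicator {t..} s"
    using AE_lborel_singleton[of t] by eventually_elim (simp add: indicator_def)
  ultimately show ?thesis
    by (subst (asm) integral_cong_AE) simp_all
qed

section \<open>Correlated Gaussians\<close>

lemma integrable_mult_bounded:
  fixes f g :: "'a \<Rightarrow> real"
  assumes f: "integrable M f" and g: "g \<in> borel_measurable M" and g_bound: "\<And>x. \<bar>g x\<bar> \<le> B"
  shows "integrable M (\<lambda>x. f x * g x)"
proof (rule Bochner_Integration.integrable_bound)
  show "integrable M (\<lambda>x. B * \<bar>f x\<bar>)"
    using f by (intro integrable_mult_right integrable_abs)
  show "(\<lambda>x. f x * g x) \<in> borel_measurable M"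
    using f g by measurable
  have "0 \<le> B"
    using g_bound by (rule order_trans[OF abs_ge_zero])
  moreover have "\<bar>f x\<bar> * \<bar>g x\<bar> \<le> \<bar>f x\<bar> * B" for x
    by (rule mult_left_mono[OF g_bound abs_ge_zero])
  ultimately show "AE x in M. norm (f x * g x) \<le> norm (B * \<bar>f x\<bar>)"
    by (simp add: abs_mult mult.commute)
qed

lemma integrable_std_normal_density_abs_hermite: "integrable lborel (\<lambda>x. \<phi> x * \<bar>hermite n x\<bar>)"
  using integrable_abs[OF integrable_std_normal_density_poly[of "hermite_poly n"]] by (simp add: abs_mult)

lemma normal_density_affine_std: "0 < \<sigma> \<Longrightarrow> normal_density \<mu> \<sigma> (\<mu> + \<sigma> * z) = \<phi> z / \<sigma>"
  by (simp add: normal_density_def real_sqrt_mult power2_eq_square field_simps)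

lemma integral_std_normal_density_affine:
  "0 < \<sigma> \<Longrightarrow> (\<integral>z. \<phi> z * f (\<mu> + \<sigma> * z) \<partial>lborel) = (\<integral>x. normal_density \<mu> \<sigma> x * f x \<partial>lborel)"
  using lborel_integral_real_affine[of \<sigma> "\<lambda>x. normal_density \<mu> \<sigma> x * f x" \<mu>]
  by (simp add: normal_density_affine_std)

lemma std_normal_density_mult_normal_density_swap:
  assumes "u1\<^sup>2 + u2\<^sup>2 = 1" "0 < u2"
  shows "\<phi> a * normal_density (a * u1) u2 s = \<phi> s * normal_density (s * u1) u2 a"
proof -
  have "a\<^sup>2 * u2\<^sup>2 + (s - a * u1)\<^sup>2 = s\<^sup>2 * u2\<^sup>2 + (a - s * u1)\<^sup>2"
    using assms(1) by algebra
  then have "- a\<^sup>2 / 2 + - (s - a * u1)\<^sup>2 / (2 * u2\<^sup>2) = - s\<^sup>2 / 2 + - (a - s * u1)\<^sup>2 / (2 * u2\<^sup>2)"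
    using assms(2) by (simp add: field_simps)
  then have "exp (- a\<^sup>2 / 2) * exp (- (s - a * u1)\<^sup>2 / (2 * u2\<^sup>2))
      = exp (- s\<^sup>2 / 2) * exp (- (a - s * u1)\<^sup>2 / (2 * u2\<^sup>2))"
    by (simp add: exp_add[symmetric])
  then show ?thesis
    by (simp add: normal_density_def algebra_simps)
qed

lemma integrable_normal_density_kernel:
  fixes f g m :: "real \<Rightarrow> real"
  assumes \<sigma>: "0 < \<sigma>" and f: "integrable lborel f" and m[measurable]: "m \<in> borel_measurable borel"
    and g[measurable]: "g \<in> borel_measurable borel" and g_bound: "\<And>x. \<bar>g x\<bar> \<le> B"
  shows "integrable (lborel \<Otimes>\<^sub>M lborel) (\<lambda>(a, s). f a * (normal_density (m a) \<sigma> s * g s))"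
proof -
  define F where "F = (\<lambda>(a, s). f a * (normal_density (m a) \<sigma> s * g s))"
  have [measurable]: "f \<in> borel_measurable lborel"
    using f by (rule borel_measurable_integrable)
  have F_measurable [measurable]: "F \<in> borel_measurable (lborel \<Otimes>\<^sub>M lborel)"
    unfolding F_def normal_density_def by measurable
  have B: "0 \<le> B"
    using order_trans[OF abs_ge_zero g_bound] .
  have integrable_density: "integrable lborel (\<lambda>s. normal_density \<mu> \<sigma> s * h s)"
    if "h \<in> borel_measurable borel" "\<And>x. \<bar>h x\<bar> \<le> B" for \<mu> h
    using that \<sigma> by (intro integrable_mult_bounded[where B=B]) simp_all
  have bound: "norm (\<integral>s. norm (F (a, s)) \<partial>lborel) \<le> norm (B * \<bar>f a\<bar>)" for a
  proof -
    have "(\<integral>s. norm (F (a, s)) \<partial>lborel) = \<bar>f a\<bar> * (\<integral>s. normal_density (m a) \<sigma> s * \<bar>g s\<bar> \<partial>lborel)"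
      by (simp add: F_def abs_mult)
    also have "\<dots> \<le> \<bar>f a\<bar> * (\<integral>s. normal_density (m a) \<sigma> s * B \<partial>lborel)"
      using g_bound B
      by (intro mult_left_mono integral_mono integrable_density) (simp_all add: mult_left_mono)
    also have "\<dots> = B * \<bar>f a\<bar>"
      using \<sigma> by simp
    finally show ?thesis
      using B by simp
  qed
  have "integrable (lborel \<Otimes>\<^sub>M lborel) F"
  proof (rule lborel_pair.Fubini_integrable[OF F_measurable])
    have "integrable lborel (\<lambda>a. B * \<bar>f a\<bar>)"
      using f by (intro integrable_mult_right integrable_abs)
    moreover have "(\<lambda>a. \<integral>s. norm (F (a, s)) \<partial>lborel) \<in> borel_measurable lborel"
      by (rule lborel.borel_measurable_lebesgue_integral) (simp add: split_beta')
    ultimately show "integrable lborel (\<lambda>a. \<integral>s. norm (F (a, s)) \<partial>lborel)"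
      by (rule Bochner_Integration.integrable_bound) (rule AE_I2[OF bound])
    show "AE a in lborel. integrable lborel (\<lambda>s. F (a, s))"
      using integrable_density[OF g g_bound] by (simp add: F_def)
  qed
  then show ?thesis
    by (simp only: F_def)
qed

lemma integral_hermite_correlated_nondegenerate:
  assumes u: "u1\<^sup>2 + u2\<^sup>2 = 1" "0 < u2"
    and g[measurable]: "g \<in> borel_measurable borel" and g_bound: "\<And>x. \<bar>g x\<bar> \<le> B"
  shows "(\<integral>a. \<phi> a * hermite n a * (\<integral>b. \<phi> b * g (a * u1 + b * u2) \<partial>lborel) \<partial>lborel)
    = u1 ^ n * (\<integral>s. \<phi> s * hermite n s * g s \<partial>lborel)"
proof -
  \<comment> \<open>the joint density of \<open>(\<alpha>, u1 \<alpha> + u2 \<beta>)\<close> at \<open>(a, s)\<close>, weighted by \<open>hermite n a * g s\<close>\<close>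
  define H where "H a s = \<phi> a * hermite n a * (normal_density (a * u1) u2 s * g s)" for a s
  have H_swap: "H a s = \<phi> s * g s * (hermite n a * normal_density (s * u1) u2 a)" for a s
    unfolding H_def using std_normal_density_mult_normal_density_swap[OF u, of a s] by (simp add: mult_ac)
  have "integrable (lborel \<Otimes>\<^sub>M lborel) (case_prod H)"
    unfolding H_def using integrable_std_normal_density_poly[of "hermite_poly n"] u(2) g_bound
    by (intro integrable_normal_density_kernel[where m="\<lambda>a. a * u1" and B=B]) simp_all
  then have "(\<integral>a. (\<integral>s. H a s \<partial>lborel) \<partial>lborel) = (\<integral>s. (\<integral>a. H a s \<partial>lborel) \<partial>lborel)"
    by (rule lborel_pair.Fubini_integral[symmetric])
  moreover have "(\<integral>b. \<phi> b * g (a * u1 + b * u2) \<partial>lborel) = (\<integral>s. normal_density (a * u1) u2 s * g s \<partial>lborel)" for a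
    using integral_std_normal_density_affine[OF u(2)] by (simp add: mult.commute[of u2])
  moreover have "(\<integral>a. H a s \<partial>lborel) = u1 ^ n * (\<phi> s * hermite n s * g s)" for s
  proof -
    have "(\<integral>a. hermite n a * normal_density (s * u1) u2 a \<partial>lborel) = u1 ^ n * hermite n s"
      using integral_std_normal_density_affine[OF u(2), of "hermite n" "s * u1", symmetric]
        integral_hermite_gaussian_noise[OF u(1), of n s]
      by (simp add: mult_ac)
    then show ?thesis
      unfolding H_swap Bochner_Integration.integral_mult_right_zero by (simp only: ac_simps)
  qed
  ultimately show ?thesis
    by (simp add: H_def)
qed

lemma integral_hermite_correlated:
  assumes u: "u1\<^sup>2 + u2\<^sup>2 = 1" "0 \<le> u2"
    and g: "g \<in> borel_measurable borel" and g_bound: "\<And>x. \<bar>g x\<bar> \<le> B"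
  shows "(\<integral>a. \<phi> a * hermite n a * (\<integral>b. \<phi> b * g (a * u1 + b * u2) \<partial>lborel) \<partial>lborel)
    = u1 ^ n * (\<integral>s. \<phi> s * hermite n s * g s \<partial>lborel)"
proof (cases "u2 = 0")
  case False
  with u show ?thesis
    using integral_hermite_correlated_nondegenerate[OF _ _ g g_bound] by simp
next
  case True
  then have "u1 = 1 \<or> u1 = -1"
    using u(1) by (simp add: power2_eq_1_iff)
  moreover have "(\<integral>a. \<phi> a * hermite n a * (\<integral>b. \<phi> b * g (a * u1 + b * u2) \<partial>lborel) \<partial>lborel)
      = (\<integral>a. \<phi> a * hermite n a * g (a * u1) \<partial>lborel)"
    using True by simp
  moreover have "(\<integral>a. \<phi> a * hermite n a * g (- a) \<partial>lborel) = (\<integral>s. \<phi> (- s) * hermite n (- s) * g s \<partial>lborel)"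
    using lborel_integral_real_affine[of "-1" "\<lambda>a. \<phi> a * hermite n a * g (- a)" 0] by simp
  moreover have "\<dots> = (\<integral>s. (-1) ^ n * (\<phi> s * hermite n s * g s) \<partial>lborel)"
    by (intro Bochner_Integration.integral_cong) (simp_all add: hermite_minus)
  ultimately show ?thesis
    by auto
qed

section \<open>The expectation over \<open>(w\<^sub>0, b\<^sub>0)\<close>\<close>

lemma sets_std_normal [measurable_cong]: "sets std_normal = sets borel"
  by (simp add: std_normal_def)

lemma prob_space_std_normal: "prob_space std_normal"
  unfolding std_normal_def using prob_space_normal_density[of 1 0] by simp

lemma integral_std_normal:
  "f \<in> borel_measurable borel \<Longrightarrow> (\<integral>x. f x \<partial>std_normal) = (\<integral>x. \<phi> x * f x \<partial>lborel)"
  unfolding std_normal_def by (subst integral_density) auto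

lemma integrable_std_normal_iff:
  "f \<in> borel_measurable borel \<Longrightarrow> integrable std_normal f \<longleftrightarrow> integrable lborel (\<lambda>x. \<phi> x * f x)"
  unfolding std_normal_def by (subst integrable_density) auto

lemma (in prob_space) integrable_pair_fst:
  fixes f :: "'b \<Rightarrow> real"
  assumes "integrable N f"
  shows "integrable (N \<Otimes>\<^sub>M M) (\<lambda>x. f (fst x))"
proof -
  have "integrable (distr (N \<Otimes>\<^sub>M M) N fst) f"
    unfolding distr_pair_fst by (rule assms)
  then show ?thesis
    by (rule integrable_distr[OF measurable_fst])
qed

lemma gauss_exp3_eq_iterated_std_normal:
  fixes f :: "real \<Rightarrow> real \<Rightarrow> real \<Rightarrow> real"
  assumes f[measurable]: "(\<lambda>((a, b), c). f a b c) \<in> borel_measurable ((borel \<Otimes>\<^sub>M borel) \<Otimes>\<^sub>M borel)"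
    and G: "integrable std_normal G" and bound: "\<And>a b c. \<bar>f a b c\<bar> \<le> G a"
  shows "gauss_exp3 f = (\<integral>c. (\<integral>a. (\<integral>b. f a b c \<partial>std_normal) \<partial>std_normal) \<partial>std_normal)"
proof -
  let ?N = std_normal
  interpret N: prob_space ?N
    by (rule prob_space_std_normal)
  interpret N2: pair_prob_space ?N ?N
    by unfold_locales
  interpret N3: pair_prob_space "?N \<Otimes>\<^sub>M ?N" ?N
    by unfold_locales
  have f_N[measurable]: "(\<lambda>((a, b), c). f a b c) \<in> borel_measurable ((?N \<Otimes>\<^sub>M ?N) \<Otimes>\<^sub>M ?N)"
    by measurable
  have int_3: "integrable ((?N \<Otimes>\<^sub>M ?N) \<Otimes>\<^sub>M ?N) (\<lambda>((a, b), c). f a b c)"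
    using N.integrable_pair_fst[OF N.integrable_pair_fst[OF G]] f_N
    by (rule Bochner_Integration.integrable_bound) (simp_all add: split_beta' order_trans[OF bound abs_ge_self])
  have int_2: "integrable (?N \<Otimes>\<^sub>M ?N) (\<lambda>(a, b). f a b c)" for c
  proof (rule Bochner_Integration.integrable_bound[OF N.integrable_pair_fst[OF G]])
    have "(\<lambda>x. (\<lambda>((a, b), c). f a b c) (x, c)) \<in> borel_measurable (?N \<Otimes>\<^sub>M ?N)"
      by measurable
    then show "(\<lambda>(a, b). f a b c) \<in> borel_measurable (?N \<Otimes>\<^sub>M ?N)"
      by (simp add: split_beta')
  qed (simp add: split_beta' order_trans[OF bound abs_ge_self])
  have "gauss_exp3 f = (\<integral>c. (\<integral>(a, b). f a b c \<partial>(?N \<Otimes>\<^sub>M ?N)) \<partial>?N)"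
    unfolding gauss_exp3_def using N3.integral_snd[OF int_3] by (simp add: split_beta')
  also have "\<dots> = (\<integral>c. (\<integral>a. (\<integral>b. f a b c \<partial>?N) \<partial>?N) \<partial>?N)"
    unfolding N2.integral_fst[OF int_2] ..
  finally show ?thesis .
qed

lemma gauss_exp3_eq_iterated:
  fixes f :: "real \<Rightarrow> real \<Rightarrow> real \<Rightarrow> real"
  assumes f[measurable]: "(\<lambda>((a, b), c). f a b c) \<in> borel_measurable ((borel \<Otimes>\<^sub>M borel) \<Otimes>\<^sub>M borel)"
    and G[measurable]: "G \<in> borel_measurable borel" and G_int: "integrable lborel (\<lambda>a. \<phi> a * G a)"
    and bound: "\<And>a b c. \<bar>f a b c\<bar> \<le> G a"
  shows "gauss_exp3 f = (\<integral>c. \<phi> c * (\<integral>a. \<phi> a * (\<integral>b. \<phi> b * f a b c \<partial>lborel) \<partial>lborel) \<partial>lborel)"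
proof -
  have [measurable (raw)]: "(\<lambda>x. f (ga x) (gb x) (gc x)) \<in> borel_measurable M"
    if [measurable]: "ga \<in> borel_measurable M" "gb \<in> borel_measurable M" "gc \<in> borel_measurable M"
    for M :: "'a measure" and ga gb gc
    using measurable_compose[OF _ f, of "\<lambda>x. ((ga x, gb x), gc x)"] by simp
  have [measurable]: "(\<lambda>b. f a b c) \<in> borel_measurable borel" for a c
    by measurable
  have "(\<lambda>a. \<integral>b. \<phi> b * f a b c \<partial>lborel) \<in> borel_measurable borel" for c
    by measurable
  moreover have "(\<lambda>c. \<integral>a. \<phi> a * (\<integral>b. \<phi> b * f a b c \<partial>lborel) \<partial>lborel) \<in> borel_measurable borel"
    by measurable
  moreover have "integrable std_normal G"
    using G_int by (simp add: integrable_std_normal_iff)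
  ultimately show ?thesis
    by (simp add: gauss_exp3_eq_iterated_std_normal[OF f _ bound] integral_std_normal)
qed

lemma gauss_exp3_hermite_halfspace:
  assumes u: "u1\<^sup>2 + u2\<^sup>2 = 1" "0 \<le> u2"
    and J[measurable]: "J \<in> borel_measurable borel" and J_bound: "\<And>c. \<bar>J c\<bar> \<le> 1"
  shows "gauss_exp3 (\<lambda>a b c. hermite (Suc n) a * J c * indicator {0..} (a * u1 + b * u2 + c))
    = u1 ^ Suc n * (\<integral>t. J (- t) * \<phi> t ^ 2 * hermite n t \<partial>lborel)"
proof -
  let ?h = "hermite (Suc n)"
  have "gauss_exp3 (\<lambda>a b c. ?h a * J c * indicator {0..} (a * u1 + b * u2 + c))
      = (\<integral>c. \<phi> c * (\<integral>a. \<phi> a * (\<integral>b. \<phi> b * (?h a * J c * indicator {0..} (a * u1 + b * u2 + c))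
          \<partial>lborel) \<partial>lborel) \<partial>lborel)"
  proof (rule gauss_exp3_eq_iterated[where G="\<lambda>a. \<bar>?h a\<bar>"])
    show "(\<lambda>((a, b), c). ?h a * J c * indicator {0..} (a * u1 + b * u2 + c) :: real)
        \<in> borel_measurable ((borel \<Otimes>\<^sub>M borel) \<Otimes>\<^sub>M borel)"
      unfolding split_beta' by measurable
    show "\<bar>?h a * J c * indicator {0..} (a * u1 + b * u2 + c)\<bar> \<le> \<bar>?h a\<bar>" for a b c
      using J_bound[of c] by (simp add: abs_mult indicator_def mult_left_le)
  qed (simp_all add: integrable_std_normal_density_abs_hermite)
  also have "\<dots> = (\<integral>c. \<phi> c * (J c * (u1 ^ Suc n * (\<phi> (- c) * hermite n (- c)))) \<partial>lborel)"
  proof (intro Bochner_Integration.integral_cong refl arg_cong[where f="(*) (\<phi> _)"])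
    fix c :: real
    have shift: "indicator {0..} (x + c) = (indicator {- c..} x :: real)" for x
      by (auto simp: indicator_def)
    define P where "P a = (\<integral>b. \<phi> b * indicator {- c..} (a * u1 + b * u2) \<partial>lborel)" for a
    have "(\<integral>b. \<phi> b * (?h a * J c * indicator {0..} (a * u1 + b * u2 + c)) \<partial>lborel) = ?h a * J c * P a" for a
      by (simp add: P_def shift mult.left_commute[of "\<phi> _"])
    then have "(\<integral>a. \<phi> a * (\<integral>b. \<phi> b * (?h a * J c * indicator {0..} (a * u1 + b * u2 + c))
          \<partial>lborel) \<partial>lborel) = (\<integral>a. J c * (\<phi> a * ?h a * P a) \<partial>lborel)"
      by (simp only: ac_simps)
    also have "\<dots> = J c * (\<integral>a. \<phi> a * ?h a * P a \<partial>lborel)"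
      by (rule Bochner_Integration.integral_mult_right_zero)
    also have "\<dots> = J c * (u1 ^ Suc n * (\<integral>s. \<phi> s * ?h s * indicator {- c..} s \<partial>lborel))"
      unfolding P_def using u by (subst integral_hermite_correlated[where B=1]) simp_all
    also have "\<dots> = J c * (u1 ^ Suc n * (\<phi> (- c) * hermite n (- c)))"
      by (simp only: integral_std_normal_density_hermite_Ici)
    finally show "(\<integral>a. \<phi> a * (\<integral>b. \<phi> b * (?h a * J c * indicator {0..} (a * u1 + b * u2 + c))
          \<partial>lborel) \<partial>lborel) = J c * (u1 ^ Suc n * (\<phi> (- c) * hermite n (- c)))" .
  qed
  also have "\<dots> = (\<integral>t. u1 ^ Suc n * (J (- t) * \<phi> t ^ 2 * hermite n t) \<partial>lborel)"
    using lborel_integral_real_affine[of "-1" "\<lambda>c. \<phi> c * (J c * (u1 ^ Suc n * (\<phi> (- c) * hermite n (- c))))" 0]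
    by (simp add: power2_eq_square mult_ac)
  finally show ?thesis
    by simp
qed

lemma gauss_exp3_hermite_representation:
  assumes C: "0 < C" and J: "J \<in> borel_measurable borel" "\<And>c. \<bar>J c\<bar> \<le> 1"
    and L: "0 < L" "L \<le> \<bar>\<integral>t. J (- t) * \<phi> t ^ 2 * hermite n t \<partial>lborel\<bar>"
  shows "\<exists>q. L / C ^ Suc n \<le> \<bar>q\<bar> \<and> (\<forall>x1. \<bar>x1\<bar> \<le> C \<longrightarrow>
    x1 ^ Suc n = 1 / q * gauss_exp3 (\<lambda>a b c.
      hermite (Suc n) a * J c * indicator {0..} ((a * x1 + b * sqrt (C\<^sup>2 - x1\<^sup>2)) / C + c)))"
proof (intro exI conjI allI impI)
  define K where "K = (\<integral>t. J (- t) * \<phi> t ^ 2 * hermite n t \<partial>lborel)"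
  show "L / C ^ Suc n \<le> \<bar>K / C ^ Suc n\<bar>"
    using L C by (simp add: K_def divide_right_mono)
  fix x1 assume x1: "\<bar>x1\<bar> \<le> C"
  define u1 u2 where "u1 = x1 / C" and "u2 = sqrt (C\<^sup>2 - x1\<^sup>2) / C"
  have "x1\<^sup>2 \<le> C\<^sup>2"
    using x1 abs_le_square_iff[of x1 C] C by simp
  then have u: "u1\<^sup>2 + u2\<^sup>2 = 1" "0 \<le> u2"
    using C by (simp_all add: u1_def u2_def power_divide field_simps)
  have "gauss_exp3 (\<lambda>a b c. hermite (Suc n) a * J c * indicator {0..} ((a * x1 + b * sqrt (C\<^sup>2 - x1\<^sup>2)) / C + c))
      = gauss_exp3 (\<lambda>a b c. hermite (Suc n) a * J c * indicator {0..} (a * u1 + b * u2 + c))"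
    by (simp add: u1_def u2_def add_divide_distrib)
  also have "\<dots> = u1 ^ Suc n * K"
    unfolding K_def by (rule gauss_exp3_hermite_halfspace[OF u J])
  finally show "x1 ^ Suc n = 1 / (K / C ^ Suc n) * gauss_exp3 (\<lambda>a b c.
      hermite (Suc n) a * J c * indicator {0..} ((a * x1 + b * sqrt (C\<^sup>2 - x1\<^sup>2)) / C + c))"
    using L C unfolding K_def[symmetric] by (auto simp: u1_def u2_def power_divide)
qed

section \<open>Lower bound on the constant\<close>

lemma matchings_Suc_ratio:
  assumes "2 * k + 2 \<le> n"
  shows "2 * Suc k * matchings n (Suc k) = (n - 2 * k) * (n - 2 * k - 1) * matchings n k"
proof -
  define r where "r = n - 2 * Suc k"
  have r: "n - 2 * Suc k = r" "n - 2 * k = Suc (Suc r)" "n - 2 * k - 1 = Suc r"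
    using assms unfolding r_def by simp_all
  have "(2 * Suc k * matchings n (Suc k)) * (fact k * fact r * 2 ^ k)
      = matchings n (Suc k) * (fact (Suc k) * fact (n - 2 * Suc k) * 2 ^ Suc k)"
    unfolding r(1) by (simp only: fact_Suc of_nat_id power_Suc ac_simps)
  also have "\<dots> = fact n"
    using assms by (intro matchings_fact) simp
  also have "\<dots> = matchings n k * (fact k * fact (n - 2 * k) * 2 ^ k)"
    using assms by (intro matchings_fact[symmetric]) simp
  also have "\<dots> = ((n - 2 * k) * (n - 2 * k - 1) * matchings n k) * (fact k * fact r * 2 ^ k)"
    unfolding r(2,3) by (simp only: diff_Suc_1 fact_Suc of_nat_id ac_simps)
  finally show ?thesis by simp
qed

lemma matchings_le_Suc:
  assumes "2 * k + 2 \<le> n"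
  shows "matchings n k \<le> Suc k * matchings n (Suc k)"
proof -
  have "2 * 1 \<le> (n - 2 * k) * (n - 2 * k - 1)"
    using assms by (intro mult_le_mono) auto
  then have "2 * matchings n k \<le> (n - 2 * k) * (n - 2 * k - 1) * matchings n k"
    by (intro mult_right_mono) simp_all
  also have "\<dots> = 2 * (Suc k * matchings n (Suc k))"
    using matchings_Suc_ratio[OF assms] by simp
  finally show ?thesis
    by simp
qed

lemma hermite_term_Suc_dominates:
  assumes k: "2 * k + 2 \<le> n" and t: "\<bar>t\<bar> \<le> 1 / (2 * (real n + 1))"
  shows "8 * \<bar>hermite_term n k t\<bar> \<le> \<bar>hermite_term n (Suc k) t\<bar>"
proof -
  have m: "real (matchings n k) \<le> real (Suc k) * real (matchings n (Suc k))"
    using matchings_le_Suc[OF k] by (simp only: of_nat_mult[symmetric] of_nat_le_iff)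
  have "real (2 * k + 2) \<le> real n"
    using k by (simp only: of_nat_le_iff)
  then have "8 * real (Suc k) \<le> 4 * (real n + 1)"
    by simp
  also have "\<dots> \<le> 4 * (real n + 1)\<^sup>2"
    using self_le_power[of "real n + 1" 2] by simp
  finally have "8 * real (Suc k) * t\<^sup>2 \<le> 4 * (real n + 1)\<^sup>2 * t\<^sup>2"
    by (intro mult_right_mono) auto
  also have "\<dots> = (\<bar>t\<bar> * (2 * (real n + 1)))\<^sup>2"
    by (simp add: power2_eq_square algebra_simps)
  also have "\<dots> \<le> 1"
    using t by (intro power_le_one) (auto simp: field_simps)
  finally have small: "8 * real (Suc k) * t\<^sup>2 \<le> 1" .
  have "n - 2 * k = 2 + (n - 2 * Suc k)"
    using k by simp
  then have pow: "\<bar>t\<bar> ^ (n - 2 * k) = t\<^sup>2 * \<bar>t\<bar> ^ (n - 2 * Suc k)"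
    by (simp add: power_add power2_eq_square)
  have "8 * \<bar>hermite_term n k t\<bar> = 8 * real (matchings n k) * t\<^sup>2 * \<bar>t\<bar> ^ (n - 2 * Suc k)"
    by (simp add: hermite_term_def abs_mult power_abs pow)
  also have "\<dots> \<le> 8 * (real (Suc k) * real (matchings n (Suc k))) * t\<^sup>2 * \<bar>t\<bar> ^ (n - 2 * Suc k)"
    using m by (intro mult_right_mono mult_left_mono) auto
  also have "\<dots> = (8 * real (Suc k) * t\<^sup>2) * (real (matchings n (Suc k)) * \<bar>t\<bar> ^ (n - 2 * Suc k))"
    by (simp only: ac_simps)
  also have "\<dots> \<le> real (matchings n (Suc k)) * \<bar>t\<bar> ^ (n - 2 * Suc k)"
    using small by (intro mult_left_le_one_le) auto
  also have "\<dots> = \<bar>hermite_term n (Suc k) t\<bar>"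
    by (simp add: hermite_term_def abs_mult power_abs)
  finally show ?thesis .
qed

lemma hermite_near_lowest_term:
  assumes t: "\<bar>t\<bar> \<le> 1 / (2 * (real n + 1))"
  shows "\<bar>hermite n t - hermite_term n (n div 2) t\<bar> \<le> \<bar>hermite_term n (n div 2) t\<bar> / 7"
proof -
  have partial: "(\<Sum>j<k. \<bar>hermite_term n j t\<bar>) \<le> \<bar>hermite_term n k t\<bar> / 7" if "k \<le> n div 2" for k
    using that
  proof (induction k)
    case (Suc k)
    then have "(\<Sum>j<k. \<bar>hermite_term n j t\<bar>) \<le> \<bar>hermite_term n k t\<bar> / 7" by simp
    moreover have "8 * \<bar>hermite_term n k t\<bar> \<le> \<bar>hermite_term n (Suc k) t\<bar>"
      using Suc.prems t by (intro hermite_term_Suc_dominates) auto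
    ultimately show ?case by simp
  qed simp
  have "hermite n t = (\<Sum>j<n div 2. hermite_term n j t) + hermite_term n (n div 2) t"
    using hermite_eq_sum_terms[of n "n div 2" t] by (simp add: lessThan_Suc_atMost[symmetric])
  then have "\<bar>hermite n t - hermite_term n (n div 2) t\<bar> = \<bar>\<Sum>j<n div 2. hermite_term n j t\<bar>"
    by simp
  also have "\<dots> \<le> (\<Sum>j<n div 2. \<bar>hermite_term n j t\<bar>)"
    by (rule sum_abs)
  also have "\<dots> \<le> \<bar>hermite_term n (n div 2) t\<bar> / 7"
    by (rule partial) simp
  finally show ?thesis .
qed

lemma matchings_perfect: "matchings (2 * j) j = dfact (2 * j - 1)"
proof (induction j)
  case (Suc j)
  then show ?case by (cases j) (simp_all add: matchings_eq_0 numeral_2_eq_2)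
qed simp

lemma matchings_near_perfect: "matchings (Suc (2 * j)) j = dfact (Suc (2 * j))"
proof (induction j)
  case (Suc j)
  have "matchings (Suc (2 * Suc j)) (Suc j)
      = matchings (2 * Suc j) (Suc j) + (2 * j + 2) * matchings (Suc (2 * j)) j"
    by simp
  then show ?case using Suc.IH matchings_perfect[of "Suc j"] by simp
qed simp

lemma dfact_Suc_le: "dfact (Suc n) \<le> (n + 2) * dfact n"
proof (induction n rule: dfact.induct)
  case (3 n)
  have "dfact (Suc (Suc (Suc n))) = Suc (Suc (Suc n)) * dfact (Suc n)"
    by (rule dfact.simps(3))
  also have "\<dots> \<le> Suc (Suc (Suc n)) * ((n + 2) * dfact n)"
    using "3.IH" by (rule mult_le_mono2)
  also have "\<dots> \<le> (n + 4) * ((n + 2) * dfact n)"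
    by (rule mult_le_mono1) simp
  also have "\<dots> = (Suc (Suc n) + 2) * dfact (Suc (Suc n))"
    by (simp add: algebra_simps)
  finally show ?case .
qed simp_all

lemma dfact_pos: "0 < dfact n"
  by (induction n rule: dfact.induct) simp_all

lemma std_normal_density_sq_ge:
  assumes "\<bar>t\<bar> \<le> 1 / 2"
  shows "3 / 32 \<le> \<phi> t ^ 2"
proof -
  have "t\<^sup>2 \<le> (1 / 2)\<^sup>2"
    using assms by (metis abs_ge_zero power2_abs power_mono)
  then have "3 / 4 \<le> exp (- t\<^sup>2)"
    using exp_ge_add_one_self[of "- t\<^sup>2"] by (simp add: power2_eq_square)
  moreover have "\<phi> t ^ 2 = exp (- t\<^sup>2) / (2 * pi)"
  proof -
    have "exp (- t\<^sup>2 / 2) ^ 2 = exp (- t\<^sup>2)"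
      by (simp add: power2_eq_square exp_add[symmetric])
    then show ?thesis
      by (simp add: std_normal_density_def power_mult_distrib power_divide)
  qed
  moreover have "2 * pi \<le> 8"
    using pi_less_4 by simp
  ultimately have "3 / 4 / 8 \<le> \<phi> t ^ 2"
    by (simp only:) (rule frac_le, simp_all)
  then show ?thesis
    by simp
qed

lemma hermite_sign_near_zero:
  assumes t: "\<bar>t\<bar> \<le> 1 / (2 * (real n + 1))"
    and pos: "0 \<le> (-1) ^ (n div 2) * hermite_term n (n div 2) t"
  shows "6 / 7 * ((-1) ^ (n div 2) * hermite_term n (n div 2) t) \<le> (-1) ^ (n div 2) * hermite n t"
proof -
  define \<sigma> :: real where "\<sigma> = (-1) ^ (n div 2)"
  define T where "T = hermite_term n (n div 2) t"
  have "\<bar>T\<bar> = \<sigma> * T"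
    using abs_of_nonneg[OF pos] by (simp add: \<sigma>_def T_def abs_mult)
  moreover have "\<bar>\<sigma> * hermite n t - \<sigma> * T\<bar> \<le> \<bar>T\<bar> / 7"
    using hermite_near_lowest_term[OF t] by (simp add: \<sigma>_def T_def abs_mult flip: right_diff_distrib)
  ultimately show ?thesis
    unfolding \<sigma>_def[symmetric] T_def[symmetric] by linarith
qed

lemma hermite_window_lower_bound:
  fixes \<sigma> B :: real
  assumes W: "W \<in> sets borel" "{a..b} \<subseteq> W" and ab: "a \<le> b" "{a..b} \<subseteq> {- 1 / 2..1 / 2}"
    and \<sigma>: "\<bar>\<sigma>\<bar> = 1" and B: "0 \<le> B"
    and nonneg: "\<And>t. t \<in> W \<Longrightarrow> 0 \<le> \<sigma> * hermite n t"
    and lower: "\<And>t. t \<in> {a..b} \<Longrightarrow> B \<le> \<sigma> * hermite n t"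
  shows "3 / 32 * B * (b - a) \<le> \<bar>\<integral>t. indicator W t * \<phi> t ^ 2 * hermite n t \<partial>lborel\<bar>"
proof -
  let ?F = "\<lambda>t. indicator W t * \<phi> t ^ 2 * (\<sigma> * hermite n t)"
  have "integrable lborel (\<lambda>t. \<phi> t * hermite n t * (\<sigma> * indicator W t * \<phi> t))"
    using W(1) integrable_std_normal_density_poly[of "hermite_poly n"]
    by (intro integrable_mult_bounded[where g="\<lambda>t. \<sigma> * indicator W t * \<phi> t" and B=1])
      (simp_all add: abs_mult \<sigma> indicator_def std_normal_density_le_1)
  then have F_int: "integrable lborel ?F"
    by (simp add: power2_eq_square mult_ac)
  have "3 / 32 * B * (b - a) = (\<integral>t. indicator {a..b} t * (3 / 32 * B) \<partial>lborel)"
    using ab(1) by simp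
  also have "\<dots> \<le> (\<integral>t. ?F t \<partial>lborel)"
  proof (rule integral_mono[OF _ F_int])
    show "integrable lborel (\<lambda>t. indicator {a..b} t * (3 / 32 * B))"
      using ab(1) by (intro integrable_mult_left integrable_real_indicator) (simp_all add: emeasure_lborel_Icc)
    show "indicator {a..b} t * (3 / 32 * B) \<le> ?F t" for t
    proof (cases "t \<in> {a..b}")
      case True
      then have "3 / 32 * B \<le> \<phi> t ^ 2 * (\<sigma> * hermite n t)"
        using ab(2) B lower by (intro mult_mono std_normal_density_sq_ge) auto
      then show ?thesis
        using True W(2) by auto
    next
      case False
      have "0 \<le> ?F t"
        using nonneg[of t] by (simp add: indicator_def)
      then show ?thesis
        using False by simp
    qed
  qed
  also have "\<dots> = \<sigma> * (\<integral>t. indicator W t * \<phi> t ^ 2 * hermite n t \<partial>lborel)"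
    by (simp add: mult_ac)
  also have "\<dots> \<le> \<bar>\<sigma> * (\<integral>t. indicator W t * \<phi> t ^ 2 * hermite n t \<partial>lborel)\<bar>"
    by (rule abs_ge_self)
  also have "\<dots> = \<bar>\<integral>t. indicator W t * \<phi> t ^ 2 * hermite n t \<partial>lborel\<bar>"
    using \<sigma> by (simp add: abs_mult)
  finally show ?thesis .
qed

lemma hermite_window_lower_bound_odd:
  assumes "odd n"
  defines "\<delta> \<equiv> 1 / (2 * (real n + 1))"
  shows "real (dfact n) / (200 * (real n + 1)\<^sup>2)
    \<le> \<bar>\<integral>t. indicator {0..\<delta>} t * \<phi> t ^ 2 * hermite n t \<partial>lborel\<bar>"
proof -
  obtain j where n: "n = 2 * j + 1"
    using assms(1) oddE by blast
  define D where "D = real (dfact n)"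
  have \<delta>: "0 < \<delta>" "\<delta> \<le> 1 / 2"
    by (simp_all add: \<delta>_def field_simps)
  have sign: "6 / 7 * (D * t) \<le> (-1) ^ (n div 2) * hermite n t" if "0 \<le> t" "t \<le> \<delta>" for t
  proof -
    have "(-1) ^ (n div 2) * hermite_term n (n div 2) t = D * t"
      by (simp add: n hermite_term_def matchings_near_perfect D_def flip: power_add)
    then show ?thesis
      using hermite_sign_near_zero[of t n] that by (simp add: \<delta>_def D_def)
  qed
  have "3 / 32 * (6 / 7 * D * (\<delta> / 2)) * (\<delta> - \<delta> / 2)
      \<le> \<bar>\<integral>t. indicator {0..\<delta>} t * \<phi> t ^ 2 * hermite n t \<partial>lborel\<bar>"
  proof (rule hermite_window_lower_bound[where \<sigma>="(-1) ^ (n div 2)"])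
    show "0 \<le> (-1) ^ (n div 2) * hermite n t" if "t \<in> {0..\<delta>}" for t
    proof -
      have "0 \<le> 6 / 7 * (D * t)"
        using that by (simp add: D_def)
      then show ?thesis
        using sign[of t] that by simp
    qed
    show "6 / 7 * D * (\<delta> / 2) \<le> (-1) ^ (n div 2) * hermite n t" if "t \<in> {\<delta> / 2..\<delta>}" for t
    proof -
      have "D * (\<delta> / 2) \<le> D * t"
        using that by (intro mult_left_mono) (simp_all add: D_def)
      then show ?thesis
        using sign[of t] that \<delta> by simp
    qed
  qed (use \<delta> in \<open>simp_all add: D_def\<close>)
  moreover have "3 / 32 * (6 / 7 * D * (\<delta> / 2)) * (\<delta> - \<delta> / 2) = 9 / 1792 * D / (real n + 1)\<^sup>2"
    by (simp add: \<delta>_def field_simps power2_eq_square)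
  moreover have "D / 200 / (real n + 1)\<^sup>2 \<le> 9 / 1792 * D / (real n + 1)\<^sup>2"
    by (intro divide_right_mono) (simp_all add: D_def)
  ultimately show ?thesis
    by (simp add: D_def)
qed

lemma hermite_window_lower_bound_even:
  assumes "even n"
  defines "\<delta> \<equiv> 1 / (2 * (real n + 1))"
  shows "real (dfact n) / (200 * (real n + 1)\<^sup>2)
    \<le> \<bar>\<integral>t. indicator {- \<delta>..\<delta>} t * \<phi> t ^ 2 * hermite n t \<partial>lborel\<bar>"
proof -
  obtain j where n: "n = 2 * j"
    using assms(1) by blast
  define m where "m = real (dfact (n - 1))"
  have \<delta>: "0 < \<delta>" "\<delta> \<le> 1 / 2"
    by (simp_all add: \<delta>_def field_simps)
  have sign: "6 / 7 * m \<le> (-1) ^ (n div 2) * hermite n t" if "\<bar>t\<bar> \<le> \<delta>" for t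
  proof -
    have "(-1) ^ (n div 2) * hermite_term n (n div 2) t = m"
      by (simp add: n hermite_term_def matchings_perfect m_def flip: power_add)
    then show ?thesis
      using hermite_sign_near_zero[of t n] that by (simp add: \<delta>_def m_def)
  qed
  have window: "3 / 32 * (6 / 7 * m) * (\<delta> - - \<delta>) \<le> \<bar>\<integral>t. indicator {- \<delta>..\<delta>} t * \<phi> t ^ 2 * hermite n t \<partial>lborel\<bar>"
  proof (rule hermite_window_lower_bound[where \<sigma>="(-1) ^ (n div 2)"])
    show "0 \<le> (-1) ^ (n div 2) * hermite n t" if "t \<in> {- \<delta>..\<delta>}" for t
      using sign[of t] that by (simp add: m_def abs_le_iff)
    show "6 / 7 * m \<le> (-1) ^ (n div 2) * hermite n t" if "t \<in> {- \<delta>..\<delta>}" for t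
      using sign[of t] that by (simp add: abs_le_iff)
  qed (use \<delta> in \<open>simp_all add: m_def\<close>)
  have "real (dfact n) \<le> (real n + 1) * m"
  proof (cases n)
    case (Suc k)
    have "real (dfact (Suc k)) \<le> real ((k + 2) * dfact k)"
      using dfact_Suc_le[of k] by (simp only: of_nat_le_iff)
    then show ?thesis
      using Suc by (simp add: m_def algebra_simps)
  qed (simp add: m_def)
  then have "real (dfact n) / (200 * (real n + 1)\<^sup>2) \<le> (real n + 1) * m / (200 * (real n + 1)\<^sup>2)"
    by (intro divide_right_mono) simp_all
  also have "\<dots> = m / 200 / (real n + 1)"
    by (simp add: power2_eq_square)
  also have "\<dots> \<le> 9 / 112 * m / (real n + 1)"
    by (intro divide_right_mono) (simp_all add: m_def)
  also have "\<dots> = 3 / 32 * (6 / 7 * m) * (\<delta> - - \<delta>)"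
    by (simp add: \<delta>_def field_simps)
  also note window
  finally show ?thesis .
qed

theorem lemma10:
  fixes C :: real
  assumes "C > 0"
  shows "\<forall>i::nat. i \<ge> 1 \<longrightarrow>
    (\<exists>q::real. \<bar>q\<bar> \<ge> real (dfact (i - 1)) / (200 * real i ^ 2 * C ^ i) \<and>
      (\<forall>x1::real. \<bar>x1\<bar> \<le> C \<longrightarrow>
        (let x2 = sqrt (C\<^sup>2 - x1\<^sup>2) in
         (if even i then
            x1 ^ i = (1 / q) * gauss_exp3 (\<lambda>a b c.
              hermite i a * indicator {0 .. 1 / (2 * real i)} (- c)
                * indicator {0..} ((a * x1 + b * x2) / C + c))
          else
            x1 ^ i = (1 / q) * gauss_exp3 (\<lambda>a b c.
              hermite i a * indicator {- (1 / (2 * real i)) .. 1 / (2 * real i)} c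
                * indicator {0..} ((a * x1 + b * x2) / C + c))))))"
proof (intro allI impI, goal_cases)
  case (1 i)
  then obtain n where i: "i = Suc n"
    using not0_implies_Suc by fastforce
  define \<delta> where "\<delta> = 1 / (2 * (real n + 1))"
  define L where "L = real (dfact n) / (200 * (real n + 1)\<^sup>2)"
  have L_pos: "0 < L"
    using dfact_pos[of n] by (simp add: L_def)
  show ?case
  proof (cases "even i")
    case True
    then have "L \<le> \<bar>\<integral>t. indicator {0..\<delta>} (- (- t)) * \<phi> t ^ 2 * hermite n t \<partial>lborel\<bar>"
      using hermite_window_lower_bound_odd[of n] by (simp add: i L_def \<delta>_def)
    from gauss_exp3_hermite_representation[OF \<open>C > 0\<close> _ _ L_pos this] True show ?thesis
      by (simp add: i L_def \<delta>_def Let_def add.commute)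
  next
    case False
    have "indicator {- \<delta>..\<delta>} (- t) = (indicator {- \<delta>..\<delta>} t :: real)" for t
      by (auto simp: indicator_def)
    then have "L \<le> \<bar>\<integral>t. indicator {- \<delta>..\<delta>} (- t) * \<phi> t ^ 2 * hermite n t \<partial>lborel\<bar>"
      using hermite_window_lower_bound_even[of n] False by (simp add: i L_def \<delta>_def)
    from gauss_exp3_hermite_representation[OF \<open>C > 0\<close> _ _ L_pos this] False show ?thesis
      by (simp add: i L_def \<delta>_def Let_def add.commute)
  qed
qed

end
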